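(* Let $\{x_i\}_{i\in[N]}$ be the global solution of the delayed consensus system described in the context. Then for all $t\ge\tau$, \[ \max_{i\in[N]}|\dot x_i(t)|\le d_x(t-\tau)+\int_{t-\tau}^{t-\sigma}\max_{i\in[N]}|\dot x_i(s)|\,\mathrm ds. \]
   Context: Let $N\ge2$, $d\ge1$ be integers, $[N]=\{1,\dots,N\}$, $0\le\sigma\le\tau$. Let $\psi:[0,\infty)\to[0,\infty)$ be continuous, nonincreasing, positive everywhere, with $\sup\psi\le1$. Given $x_i^0\in C([-\tau,0],\mathbb{R}^d)$, $\{x_i\}$ is the global solution (continuous on $[-\tau,\infty)$, continuously differentiable on $[0,\infty)$, one-sided at $0$) of $\dot x_i(t)=\sum_{j\ne i}a_{ij}(t)(x_j(t-\tau)-x_i(t-\sigma))$ for $t>0$, with $a_{ij}(t)=\frac1{N-1}\psi(|x_i(t-\sigma)-x_j(t-\tau)|)$ and $x_i=x_i^0$ on $[-\tau,0]$. $d_x(t):=\max_{i,j\in[N]}|x_i(t)-x_j(t)|$. *)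

theory Defs
  imports "HOL-Analysis.Analysis"
begin

definition dx :: "nat \<Rightarrow> (nat \<Rightarrow> real \<Rightarrow> real^'d) \<Rightarrow> real \<Rightarrow> real" where
  "dx N x t = Max {norm (x i t - x j t) | i j. i \<in> {1..N} \<and> j \<in> {1..N}}"

end

theory Submission
  imports Defs
begin

(* By the equation, x_i'(t) is a sum of N - 1 vectors x_j(t - \<tau>) - x_i(t - \<sigma>) with weights
   in [0, 1/(N - 1)], so its norm is at most the largest norm of these vectors. Splitting
   x_j(t - \<tau>) - x_i(t - \<sigma>) = (x_j(t - \<tau>) - x_i(t - \<tau>)) - (x_i(t - \<sigma>) - x_i(t - \<tau>)), the first
   part is bounded by d_x(t - \<tau>) and the second, by the fundamental theorem of calculus, by
   the integral of max_k |x_k'| over [t - \<tau>, t - \<sigma>]. The equation is only imposed for t > 0;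
   at t = 0 it follows by continuity. *)

lemma continuous_on_Max_image:
  fixes f :: "'i \<Rightarrow> 'a::topological_space \<Rightarrow> 'b::linorder_topology"
  assumes "finite I" "I \<noteq> {}" "\<And>i. i \<in> I \<Longrightarrow> continuous_on S (f i)"
  shows "continuous_on S (\<lambda>s. Max ((\<lambda>i. f i s) ` I))"
  using assms
proof (induction I rule: finite_ne_induct)
  case (singleton i)
  then show ?case by simp
next
  case (insert i I)
  then show ?case
    by (simp add: continuous_on_max)
qed

lemma continuous_on_eq_at_left_endpoint:
  fixes f g :: "real \<Rightarrow> 'a::t2_space"
  assumes f: "continuous_on {a..} f" and g: "continuous_on {a..} g"
    and eq: "\<And>s. a < s \<Longrightarrow> f s = g s"
  shows "f a = g a"
proof -
  have "(f \<longlongrightarrow> f a) (at_right a)" "(g \<longlongrightarrow> g a) (at_right a)"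
    using f g by (auto simp: continuous_on_def intro: tendsto_within_subset)
  moreover have "\<forall>\<^sub>F s in at_right a. f s = g s"
    using eventually_at_right_less by (rule eventually_mono) (rule eq)
  ultimately show ?thesis
    using tendsto_cong tendsto_unique[OF trivial_limit_at_right_real] by metis
qed

lemma norm_diff_le_integral_of_derivative_bound:
  fixes f :: "real \<Rightarrow> 'a::banach"
  assumes "a \<le> b"
    and f': "\<And>s. s \<in> {a..b} \<Longrightarrow> (f has_vector_derivative f' s) (at s within {a..b})"
    and g: "g integrable_on {a..b}" and bound: "\<And>s. s \<in> {a..b} \<Longrightarrow> norm (f' s) \<le> g s"
  shows "norm (f b - f a) \<le> integral {a..b} g"
proof -
  have "(f' has_integral f b - f a) {a..b}"
    using fundamental_theorem_of_calculus[OF \<open>a \<le> b\<close> f'] .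
  then show ?thesis
    using integral_norm_bound_integral[OF _ g bound] by (metis has_integral_integrable_integral)
qed

lemma norm_sum_scaleR_le:
  fixes v :: "'i \<Rightarrow> 'a::real_normed_vector"
  assumes w: "\<And>j. j \<in> J \<Longrightarrow> 0 \<le> w j \<and> w j \<le> c" and v: "\<And>j. j \<in> J \<Longrightarrow> norm (v j) \<le> B"
  shows "norm (\<Sum>j\<in>J. w j *\<^sub>R v j) \<le> real (card J) * c * B"
proof -
  have "norm (\<Sum>j\<in>J. w j *\<^sub>R v j) \<le> (\<Sum>j\<in>J. c * B)"
  proof (rule order_trans[OF norm_sum sum_mono])
    fix j assume "j \<in> J"
    with w have "0 \<le> w j" "w j \<le> c" by auto
    with \<open>j \<in> J\<close> show "norm (w j *\<^sub>R v j) \<le> c * B"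
      using v by (auto intro!: mult_mono)
  qed
  then show ?thesis by simp
qed

lemma dx_ge:
  assumes "i \<in> {1..N}" "j \<in> {1..N}"
  shows "norm (x i t - x j t) \<le> dx N x t"
proof -
  have "{norm (x i t - x j t) | i j. i \<in> {1..N} \<and> j \<in> {1..N}}
      = (\<lambda>(i, j). norm (x i t - x j t)) ` ({1..N} \<times> {1..N})"
    by fastforce
  then show ?thesis
    unfolding dx_def using assms by (auto intro!: Max_ge)
qed

locale delayed_consensus =
  fixes N :: nat and \<sigma> \<tau> :: real and \<psi> :: "real \<Rightarrow> real"
    and x x' :: "nat \<Rightarrow> real \<Rightarrow> 'a::banach"
  assumes N2: "N \<ge> 2"
    and sig: "0 \<le> \<sigma>" "\<sigma> \<le> \<tau>"
    and psi_cont: "continuous_on {0..} \<psi>"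
    and psi_nonneg: "\<And>r. 0 \<le> r \<Longrightarrow> 0 \<le> \<psi> r"
    and psi_le1: "\<And>r. 0 \<le> r \<Longrightarrow> \<psi> r \<le> 1"
    and x_cont: "\<And>i. i \<in> {1..N} \<Longrightarrow> continuous_on {-\<tau>..} (x i)"
    and x_deriv: "\<And>i t. i \<in> {1..N} \<Longrightarrow> 0 \<le> t \<Longrightarrow>
                   (x i has_vector_derivative x' i t) (at t within {0..})"
    and x'_cont: "\<And>i. i \<in> {1..N} \<Longrightarrow> continuous_on {0..} (x' i)"
    and ode: "\<And>i t. i \<in> {1..N} \<Longrightarrow> 0 < t \<Longrightarrow>
      x' i t = (\<Sum>j\<in>{1..N} - {i}.
         ((1 / (real N - 1)) * \<psi> (norm (x i (t - \<sigma>) - x j (t - \<tau>))))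
           *\<^sub>R (x j (t - \<tau>) - x i (t - \<sigma>)))"
begin

definition velocity_field :: "nat \<Rightarrow> real \<Rightarrow> 'a" where
  "velocity_field i t = (\<Sum>j\<in>{1..N} - {i}.
     ((1 / (real N - 1)) * \<psi> (norm (x i (t - \<sigma>) - x j (t - \<tau>))))
       *\<^sub>R (x j (t - \<tau>) - x i (t - \<sigma>)))"

definition max_speed :: "real \<Rightarrow> real" where
  "max_speed s = Max {norm (x' i s) | i. i \<in> {1..N}}"

lemma continuous_on_delayed:
  assumes "j \<in> {1..N}" "0 \<le> c" "c \<le> \<tau>"
  shows "continuous_on {0..} (\<lambda>s. x j (s - c))"
  by (rule continuous_on_compose2[OF x_cont[OF assms(1)]])
    (use assms in \<open>auto intro!: continuous_intros\<close>)

lemma continuous_on_velocity_field: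
  assumes "i \<in> {1..N}"
  shows "continuous_on {0..} (velocity_field i)"
proof -
  have "continuous_on {0..} (\<lambda>s. \<psi> (norm (x i (s - \<sigma>) - x j (s - \<tau>))))" if "j \<in> {1..N}" for j
    by (rule continuous_on_compose2[OF psi_cont])
      (use assms that sig in \<open>auto intro!: continuous_intros continuous_on_delayed\<close>)
  then show ?thesis
    unfolding velocity_field_def using assms sig
    by (auto intro!: continuous_intros continuous_on_delayed)
qed

lemma velocity_eq_field:
  assumes "i \<in> {1..N}" "0 \<le> t"
  shows "x' i t = velocity_field i t"
proof (cases "t = 0")
  case True
  show ?thesis
    unfolding True
    by (rule continuous_on_eq_at_left_endpoint[OF x'_cont continuous_on_velocity_field])
      (use assms ode in \<open>auto simp: velocity_field_def\<close>)
qed (use assms ode in \<open>auto simp: velocity_field_def\<close>)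

lemma norm_velocity_field_le:
  assumes "i \<in> {1..N}" and B: "\<And>j. j \<in> {1..N} \<Longrightarrow> norm (x j (t - \<tau>) - x i (t - \<sigma>)) \<le> B"
  shows "norm (velocity_field i t) \<le> B"
proof -
  have "norm (velocity_field i t) \<le> real (card ({1..N} - {i})) * (1 / (real N - 1)) * B"
    unfolding velocity_field_def
    by (rule norm_sum_scaleR_le) (use N2 psi_nonneg psi_le1 B in \<open>auto intro!: divide_right_mono\<close>)
  also have "\<dots> = B"
    using assms(1) N2 by (simp add: of_nat_diff)
  finally show ?thesis .
qed

lemma norm_speed_le_max_speed:
  assumes "i \<in> {1..N}"
  shows "norm (x' i s) \<le> max_speed s"
  unfolding max_speed_def by (rule Max_ge) (use assms in \<open>auto simp: Setcompr_eq_image\<close>)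

lemma continuous_on_max_speed: "continuous_on {0..} max_speed"
  unfolding max_speed_def Setcompr_eq_image
  by (rule continuous_on_Max_image) (use N2 in \<open>auto intro!: continuous_intros x'_cont\<close>)

lemma norm_delay_increment_le:
  assumes "\<tau> \<le> t" "i \<in> {1..N}"
  shows "norm (x i (t - \<sigma>) - x i (t - \<tau>)) \<le> integral {t - \<tau>..t - \<sigma>} max_speed"
proof (rule norm_diff_le_integral_of_derivative_bound)
  have sub: "{t - \<tau>..t - \<sigma>} \<subseteq> {0..}"
    using assms by auto
  show "max_speed integrable_on {t - \<tau>..t - \<sigma>}"
    by (rule integrable_continuous_interval[OF continuous_on_subset[OF continuous_on_max_speed sub]])
  show "(x i has_vector_derivative x' i s) (at s within {t - \<tau>..t - \<sigma>})"
    if "s \<in> {t - \<tau>..t - \<sigma>}" for s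
    using that sub by (auto intro: has_vector_derivative_within_subset[OF x_deriv[OF assms(2)]])
qed (use assms sig norm_speed_le_max_speed in auto)

lemma max_speed_le:
  assumes t: "\<tau> \<le> t"
    and D: "\<And>i j. i \<in> {1..N} \<Longrightarrow> j \<in> {1..N} \<Longrightarrow> norm (x j (t - \<tau>) - x i (t - \<tau>)) \<le> D"
  shows "max_speed t \<le> D + integral {t - \<tau>..t - \<sigma>} max_speed"
proof -
  have "norm (x' i t) \<le> D + integral {t - \<tau>..t - \<sigma>} max_speed" if i: "i \<in> {1..N}" for i
  proof -
    have "norm (x j (t - \<tau>) - x i (t - \<sigma>)) \<le> D + integral {t - \<tau>..t - \<sigma>} max_speed"
      if "j \<in> {1..N}" for j
      using norm_triangle_ineq4[of "x j (t - \<tau>) - x i (t - \<tau>)" "x i (t - \<sigma>) - x i (t - \<tau>)"]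
        D[OF i that] norm_delay_increment_le[OF t i] by simp
    then show ?thesis
      using velocity_eq_field[OF i] norm_velocity_field_le[OF i] t sig by simp
  qed
  then show ?thesis
    unfolding max_speed_def[of t] by (intro Max.boundedI) (use N2 in auto)
qed

end

theorem lemma3p1:
  fixes N :: nat and \<sigma> \<tau> :: real and \<psi> :: "real \<Rightarrow> real"
    and x x' :: "nat \<Rightarrow> real \<Rightarrow> real^'d"
  assumes N2: "N \<ge> 2"
    and sig: "0 \<le> \<sigma>" "\<sigma> \<le> \<tau>"
    and psi_cont: "continuous_on {0..} \<psi>"
    and psi_mono: "\<And>a b. 0 \<le> a \<Longrightarrow> a \<le> b \<Longrightarrow> \<psi> b \<le> \<psi> a"
    and psi_pos: "\<And>r. 0 \<le> r \<Longrightarrow> 0 < \<psi> r"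
    and psi_le1: "\<And>r. 0 \<le> r \<Longrightarrow> \<psi> r \<le> 1"
    and x_cont: "\<And>i. i \<in> {1..N} \<Longrightarrow> continuous_on {-\<tau>..} (x i)"
    and x_deriv: "\<And>i t. i \<in> {1..N} \<Longrightarrow> 0 \<le> t \<Longrightarrow>
                   (x i has_vector_derivative x' i t) (at t within {0..})"
    and x'_cont: "\<And>i. i \<in> {1..N} \<Longrightarrow> continuous_on {0..} (x' i)"
    and ode: "\<And>i t. i \<in> {1..N} \<Longrightarrow> 0 < t \<Longrightarrow>
      x' i t = (\<Sum>j\<in>{1..N} - {i}.
         ((1 / (real N - 1)) * \<psi> (norm (x i (t - \<sigma>) - x j (t - \<tau>))))
           *\<^sub>R (x j (t - \<tau>) - x i (t - \<sigma>)))"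
    and t: "\<tau> \<le> t"
  shows "Max {norm (x' i t) | i. i \<in> {1..N}}
          \<le> dx N x (t - \<tau>)
             + integral {t - \<tau>..t - \<sigma>} (\<lambda>s. Max {norm (x' i s) | i. i \<in> {1..N}})"
proof -
  interpret delayed_consensus N \<sigma> \<tau> \<psi> x x'
    by unfold_locales (use N2 sig psi_cont psi_pos psi_le1 x_cont x_deriv x'_cont ode
      in \<open>auto intro: less_imp_le\<close>)
  have "max_speed t \<le> dx N x (t - \<tau>) + integral {t - \<tau>..t - \<sigma>} max_speed"
    using t dx_ge by (rule max_speed_le)
  then show ?thesis
    unfolding max_speed_def[abs_def] .
qed

end
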